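(* Let $S$ be a $\Gamma$-hemiring, let $\mu,\nu$ be fuzzy h-ideals of $S$ and let $x,y\in S$. Then $\langle x,\mu\rangle\times\langle y,\nu\rangle$ is a fuzzy h-ideal of the $\Gamma$-hemiring $S\times S$.
   Context: A $\Gamma$-hemiring is a pair of additive commutative semigroups with zero $S$ and $\Gamma$ with a map $S\times\Gamma\times S\to S$, $(a,\alpha,b)\mapsto a\alpha b$, such that for all $a,b,c\in S$, $\alpha,\beta\in\Gamma$: $(a+b)\alpha c=a\alpha c+b\alpha c$; $a\alpha(b+c)=a\alpha b+a\alpha c$; $a(\alpha+\beta)b=a\alpha b+a\beta b$; $a\alpha(b\beta c)=(a\alpha b)\beta c$; $0\alpha a=0=a\alpha0$; $a0b=0=b0a$. $S\times S$ is a $\Gamma$-hemiring with componentwise addition and $(a,b)\gamma(c,d)=(a\gamma c,b\gamma d)$. A fuzzy h-ideal of a $\Gamma$-hemiring $T$ is a map $\mu:T\to[0,1]$, not identically $0$, such that for all $x,y,a,b,z\in T$, $\gamma\in\Gamma$: $\mu(x+y)\ge\min\{\mu(x),\mu(y)\}$; $\mu(x\gamma y)\ge\mu(x)$ and $\mu(x\gamma y)\ge\mu(y)$; $x+a+z=b+z$ implies $\mu(x)\ge\min\{\mu(a),\mu(b)\}$. For fuzzy subsets $\mu,\nu$ of $S$, $(\mu\times\nu)(a,b)=\min\{\mu(a),\nu(b)\}$. The extension of a fuzzy subset $\mu$ of $S$ by $x\in S$ is $\langle x,\mu\rangle(y)=\inf_{s\in S,\ \alpha,\gamma\in\Gamma}\mu(x\alpha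 s\gamma y)$. *)

theory Defs
  imports Complex_Main "HOL-Library.Product_Plus"
begin

definition gamma_hemiring :: "('a::comm_monoid_add \<Rightarrow> 'g::comm_monoid_add \<Rightarrow> 'a \<Rightarrow> 'a) \<Rightarrow> bool" where
  "gamma_hemiring M \<longleftrightarrow>
     (\<forall>a b c \<alpha>. M (a + b) \<alpha> c = M a \<alpha> c + M b \<alpha> c) \<and>
     (\<forall>a b c \<alpha>. M a \<alpha> (b + c) = M a \<alpha> b + M a \<alpha> c) \<and>
     (\<forall>a b \<alpha> \<beta>. M a (\<alpha> + \<beta>) b = M a \<alpha> b + M a \<beta> b) \<and>
     (\<forall>a b c \<alpha> \<beta>. M a \<alpha> (M b \<beta> c) = M (M a \<alpha> b) \<beta> c) \<and>
     (\<forall>a \<alpha>. M 0 \<alpha> a = 0 \<and> M a \<alpha> 0 = 0) \<and>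
     (\<forall>a b. M a 0 b = 0 \<and> M b 0 a = 0)"

text \<open>The componentwise Gamma-multiplication on S x S (addition on pairs is the
componentwise one from Product_Plus).\<close>

definition prod_mult :: "('a \<Rightarrow> 'g \<Rightarrow> 'a \<Rightarrow> 'a) \<Rightarrow> ('a \<times> 'a) \<Rightarrow> 'g \<Rightarrow> ('a \<times> 'a) \<Rightarrow> ('a \<times> 'a)" where
  "prod_mult M p \<gamma> q = (M (fst p) \<gamma> (fst q), M (snd p) \<gamma> (snd q))"

definition fuzzy_h_ideal :: "('t::comm_monoid_add \<Rightarrow> 'g \<Rightarrow> 't \<Rightarrow> 't) \<Rightarrow> ('t \<Rightarrow> real) \<Rightarrow> bool" where
  "fuzzy_h_ideal M \<mu> \<longleftrightarrow>
     (\<forall>x. 0 \<le> \<mu> x \<and> \<mu> x \<le> 1) \<and>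
     (\<exists>x. \<mu> x \<noteq> 0) \<and>
     (\<forall>x y. \<mu> (x + y) \<ge> min (\<mu> x) (\<mu> y)) \<and>
     (\<forall>x y \<gamma>. \<mu> (M x \<gamma> y) \<ge> \<mu> x \<and> \<mu> (M x \<gamma> y) \<ge> \<mu> y) \<and>
     (\<forall>x a b z. x + a + z = b + z \<longrightarrow> \<mu> x \<ge> min (\<mu> a) (\<mu> b))"

definition fuzzy_prod :: "('a \<Rightarrow> real) \<Rightarrow> ('a \<Rightarrow> real) \<Rightarrow> ('a \<times> 'a \<Rightarrow> real)" where
  "fuzzy_prod \<mu> \<nu> p = min (\<mu> (fst p)) (\<nu> (snd p))"

definition extension :: "('a \<Rightarrow> 'g \<Rightarrow> 'a \<Rightarrow> 'a) \<Rightarrow> 'a \<Rightarrow> ('a \<Rightarrow> real) \<Rightarrow> 'a \<Rightarrow> real" where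
  "extension M x \<mu> y = Inf {\<mu> (M x \<alpha> (M s \<gamma> y)) | s \<alpha> \<gamma>. True}"

end

theory Submission
  imports Defs
begin

text \<open>The extension \<open>\<langle>x,\<mu>\<rangle>\<close> is an infimum of \<open>\<mu>\<close> along the maps \<open>w \<mapsto> x\<alpha>(s\<gamma>w)\<close>,
which are additive and absorb right multiplications by associativity; so each
fuzzy h-ideal condition transfers pointwise from \<open>\<mu>\<close> to \<open>\<langle>x,\<mu>\<rangle>\<close>, and positivity at
\<open>0\<close> survives because \<open>\<langle>x,\<mu>\<rangle>(0) = \<mu>(0)\<close>. The product of two fuzzy h-ideals is a
fuzzy h-ideal of \<open>S \<times> S\<close> since all operations there act componentwise.\<close>

lemma fuzzy_h_ideal_le_at_zero:
  assumes "fuzzy_h_ideal M \<mu>"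
  shows "\<mu> a \<le> \<mu> 0"
proof -
  have "0 + a + 0 = a + 0" by simp
  then have "min (\<mu> a) (\<mu> a) \<le> \<mu> 0"
    using assms unfolding fuzzy_h_ideal_def by blast
  then show ?thesis by simp
qed

lemma extension_le:
  assumes "fuzzy_h_ideal M \<mu>"
  shows "extension M x \<mu> y \<le> \<mu> (M x \<alpha> (M s \<gamma> y))"
proof -
  have "bdd_below {\<mu> (M x \<alpha> (M s \<gamma> y)) | s \<alpha> \<gamma>. True}"
    using assms unfolding fuzzy_h_ideal_def bdd_below_def by blast
  then show ?thesis unfolding extension_def by (rule cInf_lower[rotated]) blast
qed

lemma extension_greatest:
  assumes "\<And>s \<alpha> \<gamma>. c \<le> \<mu> (M x \<alpha> (M s \<gamma> y))"
  shows "c \<le> extension M x \<mu> y"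
  unfolding extension_def by (rule cInf_greatest) (use assms in auto)

lemma extension_min_greatest:
  assumes "fuzzy_h_ideal M \<mu>"
    and "\<And>s \<alpha> \<gamma>. min (\<mu> (M x \<alpha> (M s \<gamma> a))) (\<mu> (M x \<alpha> (M s \<gamma> b))) \<le> \<mu> (M x \<alpha> (M s \<gamma> u))"
  shows "min (extension M x \<mu> a) (extension M x \<mu> b) \<le> extension M x \<mu> u"
proof (rule extension_greatest)
  fix s \<alpha> \<gamma>
  have "min (extension M x \<mu> a) (extension M x \<mu> b)
        \<le> min (\<mu> (M x \<alpha> (M s \<gamma> a))) (\<mu> (M x \<alpha> (M s \<gamma> b)))"
    using extension_le[OF assms(1)] by (meson min.mono)
  also have "\<dots> \<le> \<mu> (M x \<alpha> (M s \<gamma> u))" by (rule assms(2))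
  finally show "min (extension M x \<mu> a) (extension M x \<mu> b) \<le> \<mu> (M x \<alpha> (M s \<gamma> u))" .
qed

lemma extension_zero:
  assumes "gamma_hemiring M"
  shows "extension M x \<mu> 0 = \<mu> 0"
proof -
  have "{\<mu> (M x \<alpha> (M s \<gamma> 0)) | s \<alpha> \<gamma>. True} = {\<mu> 0}"
    using assms unfolding gamma_hemiring_def by auto
  then show ?thesis unfolding extension_def by simp
qed

lemma fuzzy_h_ideal_extension:
  assumes hemiring: "gamma_hemiring M" and ideal: "fuzzy_h_ideal M \<mu>"
  shows "fuzzy_h_ideal M (extension M x \<mu>)"
proof -
  let ?E = "extension M x \<mu>"
  have bounds: "0 \<le> \<mu> p \<and> \<mu> p \<le> 1" for p
    using ideal unfolding fuzzy_h_ideal_def by blast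
  have add: "min (\<mu> p) (\<mu> q) \<le> \<mu> (p + q)" for p q
    using ideal unfolding fuzzy_h_ideal_def by blast
  have mult: "\<mu> p \<le> \<mu> (M p g q) \<and> \<mu> q \<le> \<mu> (M p g q)" for p g q
    using ideal unfolding fuzzy_h_ideal_def by blast
  have h_closed: "p + q + t = r + t \<Longrightarrow> min (\<mu> q) (\<mu> r) \<le> \<mu> p" for p q r t
    using ideal unfolding fuzzy_h_ideal_def by blast
  have distrib: "M x \<alpha> (M s \<gamma> (a + b)) = M x \<alpha> (M s \<gamma> a) + M x \<alpha> (M s \<gamma> b)" for \<alpha> s \<gamma> a b
    using hemiring unfolding gamma_hemiring_def by simp
  have assoc: "M a \<alpha> (M b \<beta> c) = M (M a \<alpha> b) \<beta> c" for a b c \<alpha> \<beta>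
    using hemiring unfolding gamma_hemiring_def by blast
  obtain t where "\<mu> t \<noteq> 0"
    using ideal unfolding fuzzy_h_ideal_def by blast
  then have "?E 0 \<noteq> 0"
    using fuzzy_h_ideal_le_at_zero[OF ideal, of t] bounds[of t]
    by (simp add: extension_zero[OF hemiring])
  moreover have "0 \<le> ?E w \<and> ?E w \<le> 1" for w
  proof
    show "0 \<le> ?E w" by (rule extension_greatest) (simp add: bounds)
    show "?E w \<le> 1"
      using extension_le[OF ideal, of x w 0 0 0] bounds[of "M x 0 (M 0 0 w)"] by linarith
  qed
  moreover have "min (?E a) (?E b) \<le> ?E (a + b)" for a b
    by (rule extension_min_greatest[OF ideal]) (simp add: distrib add)
  moreover have "?E a \<le> ?E (M a g b) \<and> ?E b \<le> ?E (M a g b)" for a g b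
  proof
    show "?E a \<le> ?E (M a g b)"
    proof (rule extension_greatest)
      fix s \<alpha> \<gamma>
      have "?E a \<le> \<mu> (M (M x \<alpha> (M s \<gamma> a)) g b)"
        using extension_le[OF ideal, of x a \<alpha> s \<gamma>] mult order_trans by blast
      then show "?E a \<le> \<mu> (M x \<alpha> (M s \<gamma> (M a g b)))" by (simp add: assoc)
    qed
    show "?E b \<le> ?E (M a g b)"
    proof (rule extension_greatest)
      fix s \<alpha> \<gamma>
      show "?E b \<le> \<mu> (M x \<alpha> (M s \<gamma> (M a g b)))"
        using extension_le[OF ideal, of x b \<alpha> "M s \<gamma> a" g] by (simp add: assoc)
    qed
  qed
  moreover have "min (?E a) (?E b) \<le> ?E u" if "u + a + z = b + z" for u a b z
  proof (rule extension_min_greatest[OF ideal])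
    fix s \<alpha> \<gamma>
    have "M x \<alpha> (M s \<gamma> (u + a + z)) = M x \<alpha> (M s \<gamma> (b + z))" using that by simp
    then show "min (\<mu> (M x \<alpha> (M s \<gamma> a))) (\<mu> (M x \<alpha> (M s \<gamma> b))) \<le> \<mu> (M x \<alpha> (M s \<gamma> u))"
      by (intro h_closed) (simp only: distrib)
  qed
  ultimately show ?thesis unfolding fuzzy_h_ideal_def by blast
qed

lemma fuzzy_h_ideal_prod:
  assumes \<mu>: "fuzzy_h_ideal M \<mu>" and \<nu>: "fuzzy_h_ideal M \<nu>"
  shows "fuzzy_h_ideal (prod_mult M) (fuzzy_prod \<mu> \<nu>)"
proof -
  let ?P = "fuzzy_prod \<mu> \<nu>"
  have bounds: "0 \<le> \<mu> p \<and> \<mu> p \<le> 1" "0 \<le> \<nu> p \<and> \<nu> p \<le> 1" for p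
    using \<mu> \<nu> unfolding fuzzy_h_ideal_def by blast+
  have add: "min (\<mu> p) (\<mu> q) \<le> \<mu> (p + q)" "min (\<nu> p) (\<nu> q) \<le> \<nu> (p + q)" for p q
    using \<mu> \<nu> unfolding fuzzy_h_ideal_def by blast+
  have mult: "\<mu> p \<le> \<mu> (M p g q) \<and> \<mu> q \<le> \<mu> (M p g q)"
    "\<nu> p \<le> \<nu> (M p g q) \<and> \<nu> q \<le> \<nu> (M p g q)" for p g q
    using \<mu> \<nu> unfolding fuzzy_h_ideal_def by blast+
  have h_closed: "p + q + t = r + t \<Longrightarrow> min (\<mu> q) (\<mu> r) \<le> \<mu> p"
    "p + q + t = r + t \<Longrightarrow> min (\<nu> q) (\<nu> r) \<le> \<nu> p" for p q r t
    using \<mu> \<nu> unfolding fuzzy_h_ideal_def by blast+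
  have min_mono2: "min a c \<le> e \<Longrightarrow> min b d \<le> f \<Longrightarrow> min (min a b) (min c d) \<le> min e f"
    for a b c d e f :: real
    by linarith
  obtain a where "\<mu> a \<noteq> 0"
    using \<mu> unfolding fuzzy_h_ideal_def by blast
  moreover obtain b where "\<nu> b \<noteq> 0"
    using \<nu> unfolding fuzzy_h_ideal_def by blast
  ultimately have "?P (a, b) \<noteq> 0"
    using bounds unfolding fuzzy_prod_def by (simp add: order_neq_le_trans)
  moreover have "0 \<le> ?P p \<and> ?P p \<le> 1" for p
    unfolding fuzzy_prod_def using bounds by (simp add: min.coboundedI1)
  moreover have "min (?P p) (?P q) \<le> ?P (p + q)" for p q
    unfolding fuzzy_prod_def fst_add snd_add by (rule min_mono2[OF add])
  moreover have "?P p \<le> ?P (prod_mult M p g q) \<and> ?P q \<le> ?P (prod_mult M p g q)" for p g q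
    unfolding fuzzy_prod_def prod_mult_def fst_conv snd_conv using mult by (meson min.mono)
  moreover have "min (?P a) (?P b) \<le> ?P u" if "u + a + z = b + z" for u a b z
  proof -
    have "fst u + fst a + fst z = fst b + fst z" "snd u + snd a + snd z = snd b + snd z"
      using arg_cong[OF that, of fst] arg_cong[OF that, of snd] by simp_all
    then show ?thesis unfolding fuzzy_prod_def by (rule min_mono2[OF h_closed(1) h_closed(2)])
  qed
  ultimately show ?thesis unfolding fuzzy_h_ideal_def by blast
qed

theorem theorem3p15:
  fixes M :: "'a::comm_monoid_add \<Rightarrow> 'g::comm_monoid_add \<Rightarrow> 'a \<Rightarrow> 'a"
    and \<mu> \<nu> :: "'a \<Rightarrow> real" and x y :: 'a
  assumes "gamma_hemiring M"
    and "fuzzy_h_ideal M \<mu>" and "fuzzy_h_ideal M \<nu>"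
  shows "fuzzy_h_ideal (prod_mult M) (fuzzy_prod (extension M x \<mu>) (extension M y \<nu>))"
  using assms by (intro fuzzy_h_ideal_prod fuzzy_h_ideal_extension)

end
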